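(* Let $c:[a,b]\times S^1\to\mathbb R^2$ be a smooth horizontal path of immersions ($\langle c_t,c_\theta\rangle\equiv0$), write $c_t=a\,ic_\theta/|c_\theta|$ and $s=|c_\theta|$, and suppose $c$ satisfies the $A=0$ geodesic equation $(|c_\theta|c_t)_t=-\tfrac12\big(|c_t|^2c_\theta/|c_\theta|\big)_\theta$. Then $s(t,\theta)a(t,\theta)^2$ is independent of $t$ for every $\theta$.
   Context: $S^1=\mathbb R/2\pi\mathbb Z$, $\mathbb R^2\cong\mathbb C$. Subscripts denote partial derivatives. *)

theory Defs
  imports "HOL-Analysis.Analysis"
begin

text \<open>A path of closed curves in the plane is a map c :: real => real => complex,
  c t theta, 2 pi-periodic in theta (so theta ranges over S^1 = R / 2 pi Z).\<close>

definition dT :: "(real \<Rightarrow> real \<Rightarrow> complex) \<Rightarrow> real \<Rightarrow> real \<Rightarrow> complex" where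
  "dT f t th = vector_derivative (\<lambda>s. f s th) (at t)"

definition dTh :: "(real \<Rightarrow> real \<Rightarrow> complex) \<Rightarrow> real \<Rightarrow> real \<Rightarrow> complex" where
  "dTh f t th = vector_derivative (\<lambda>s. f t s) (at th)"

fun pderivs :: "bool list \<Rightarrow> (real \<Rightarrow> real \<Rightarrow> complex) \<Rightarrow> real \<Rightarrow> real \<Rightarrow> complex" where
  "pderivs [] f = f"
| "pderivs (True # w) f = dT (pderivs w f)"
| "pderivs (False # w) f = dTh (pderivs w f)"

definition smooth2_on :: "(real \<times> real) set \<Rightarrow> (real \<Rightarrow> real \<Rightarrow> complex) \<Rightarrow> bool" where
  "smooth2_on U f \<longleftrightarrow>
     (\<forall>w. continuous_on U (\<lambda>(t, th). pderivs w f t th) \<and>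
          (\<forall>(t, th)\<in>U. (\<lambda>s. pderivs w f s th) differentiable (at t) \<and>
                        (\<lambda>s. pderivs w f t s) differentiable (at th)))"

end

theory Submission
  imports Defs
begin

text \<open>Along a horizontal path the quantity \<open>s a\<^sup>2\<close> equals \<open>|c\<^sub>\<theta>| |c\<^sub>t|\<^sup>2\<close>, and its
  \<open>t\<close>-derivative vanishes: taking the inner product of the geodesic equation with \<open>c\<^sub>t\<close>, the
  \<open>c\<^sub>\<theta>\<close>-component drops out by horizontality, while differentiating horizontality in \<open>\<theta>\<close> and
  using the symmetry of mixed partials turns \<open>c\<^sub>t \<bullet> c\<^sub>\<theta>\<^sub>\<theta>\<close> into \<open>- c\<^sub>\<theta> \<bullet> c\<^sub>\<theta>\<^sub>t\<close>, which is
  \<open>|c\<^sub>\<theta>|\<close> times the \<open>t\<close>-derivative of \<open>|c\<^sub>\<theta>|\<close>. The argument is local in \<open>\<theta>\<close>.\<close>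

lemma has_real_derivative_inner:
  fixes f g :: "real \<Rightarrow> 'a::real_inner"
  assumes "(f has_vector_derivative f') (at x within S)" "(g has_vector_derivative g') (at x within S)"
  shows "((\<lambda>x. f x \<bullet> g x) has_real_derivative (f x \<bullet> g' + f' \<bullet> g x)) (at x within S)"
  unfolding has_real_derivative_iff_has_vector_derivative
  using bounded_bilinear.has_vector_derivative[OF bounded_bilinear_inner assms] by simp

lemma has_real_derivative_norm:
  fixes v :: "real \<Rightarrow> 'a::real_inner"
  assumes "v t \<noteq> 0" "(v has_vector_derivative v') (at t)"
  shows "((\<lambda>s. norm (v s)) has_real_derivative (v t \<bullet> v') / norm (v t)) (at t)"
proof -
  have "((\<lambda>s. v s \<bullet> v s) has_real_derivative 2 * (v t \<bullet> v')) (at t)"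
    using has_real_derivative_inner[OF assms(2) assms(2)] by (simp add: inner_commute)
  from DERIV_chain2[OF DERIV_real_sqrt this] assms(1) show ?thesis
    by (simp add: norm_eq_sqrt_inner[symmetric] field_simps)
qed

lemma norm_scaled_unit_normal:
  assumes "z \<noteq> 0"
  shows "norm (complex_of_real r * \<i> * z / complex_of_real (norm z)) = \<bar>r\<bar>"
  using assms by (simp add: norm_mult norm_divide)

lemma continuous_on_slice:
  assumes "continuous_on U (\<lambda>(x, y). f x y)" "{x} \<times> S \<subseteq> U"
  shows "continuous_on S (f x)"
  using continuous_on_compose2[OF assms(1) continuous_on_Pair[OF continuous_on_const continuous_on_id]]
    assms(2) by auto

lemma pderivs_append: "pderivs (v @ w) f = pderivs v (pderivs w f)"
  by (induction v f rule: pderivs.induct) auto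

lemma smooth2_on_pderivs: "smooth2_on U f \<Longrightarrow> smooth2_on U (pderivs w f)"
  unfolding smooth2_on_def by (simp add: pderivs_append[symmetric])

lemma smooth2_on_dT: "smooth2_on U f \<Longrightarrow> smooth2_on U (dT f)"
  using smooth2_on_pderivs[of U f "[True]"] by simp

lemma smooth2_on_dTh: "smooth2_on U f \<Longrightarrow> smooth2_on U (dTh f)"
  using smooth2_on_pderivs[of U f "[False]"] by simp

lemma smooth2_on_continuous_on: "smooth2_on U f \<Longrightarrow> continuous_on U (\<lambda>(t, th). f t th)"
  unfolding smooth2_on_def by (metis pderivs.simps(1))

lemma smooth2_on_has_dT:
  assumes "smooth2_on U f" "(t, th) \<in> U"
  shows "((\<lambda>s. f s th) has_vector_derivative dT f t th) (at t)"
proof -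
  from assms have "(\<lambda>s. pderivs [] f s th) differentiable (at t)"
    unfolding smooth2_on_def by fast
  then show ?thesis unfolding dT_def by (simp add: vector_derivative_works[symmetric])
qed

lemma smooth2_on_has_dTh:
  assumes "smooth2_on U f" "(t, th) \<in> U"
  shows "((\<lambda>s. f t s) has_vector_derivative dTh f t th) (at th)"
proof -
  from assms have "(\<lambda>s. pderivs [] f t s) differentiable (at th)"
    unfolding smooth2_on_def by fast
  then show ?thesis unfolding dTh_def by (simp add: vector_derivative_works[symmetric])
qed

lemma integral_mixed_partial:
  fixes f :: "real \<Rightarrow> real \<Rightarrow> 'a::banach"
  assumes box: "T \<times> {a..b} \<subseteq> U" and T: "convex T" "t \<in> interior T" and "a \<le> b"
    and f_t: "\<And>x y. (x, y) \<in> U \<Longrightarrow> ((\<lambda>s. f s y) has_vector_derivative f_t x y) (at x)"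
    and f_th: "\<And>x y. (x, y) \<in> U \<Longrightarrow> ((\<lambda>s. f x s) has_vector_derivative f_th x y) (at y)"
    and f_th_t: "\<And>x y. (x, y) \<in> U \<Longrightarrow> ((\<lambda>s. f_th s y) has_vector_derivative f_th_t x y) (at x)"
    and cont_f_th: "continuous_on U (\<lambda>(x, y). f_th x y)"
    and cont_f_th_t: "continuous_on U (\<lambda>(x, y). f_th_t x y)"
  shows "f_t t b - f_t t a = integral {a..b} (f_th_t t)"
proof -
  have t: "t \<in> T" using T(2) interior_subset by blast
  have ftc: "integral {a..b} (f_th x) = f x b - f x a" if x: "x \<in> T" for x
  proof -
    have "(f_th x has_integral f x b - f x a) {a..b}"
    proof (rule fundamental_theorem_of_calculus[OF \<open>a \<le> b\<close>])
      fix y assume "y \<in> {a..b}"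
      then show "(f x has_vector_derivative f_th x y) (at y within {a..b})"
        using box x by (intro has_vector_derivative_at_within[OF f_th]) auto
    qed
    then show ?thesis by (rule integral_unique)
  qed
  have "((\<lambda>x. integral (cbox a b) (f_th x)) has_vector_derivative integral (cbox a b) (f_th_t t))
          (at t within T)"
  proof (rule leibniz_rule_vector_derivative)
    fix x y assume "x \<in> T" "y \<in> cbox a b"
    then show "((\<lambda>x. f_th x y) has_vector_derivative f_th_t x y) (at x within T)"
      using box by (intro has_vector_derivative_at_within[OF f_th_t]) auto
  next
    fix x assume "x \<in> T"
    then have "continuous_on (cbox a b) (f_th x)"
      using box by (intro continuous_on_slice[OF cont_f_th]) auto
    then show "f_th x integrable_on cbox a b" by (rule integrable_continuous)
  next
    show "continuous_on (T \<times> cbox a b) (\<lambda>(x, y). f_th_t x y)"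
      using box by (intro continuous_on_subset[OF cont_f_th_t]) auto
  qed (fact t T(1))+
  then have leibniz: "((\<lambda>x. integral {a..b} (f_th x)) has_vector_derivative integral {a..b} (f_th_t t))
          (at t)"
    unfolding cbox_interval at_within_interior[OF T(2)] .
  have "((\<lambda>x. f x b - f x a) has_vector_derivative f_t t b - f_t t a) (at t within T)"
    using box t \<open>a \<le> b\<close> by (intro has_vector_derivative_at_within[OF has_vector_derivative_diff] f_t) auto
  then have "((\<lambda>x. integral {a..b} (f_th x)) has_vector_derivative f_t t b - f_t t a) (at t within T)"
    by (rule has_vector_derivative_transform[OF t, rotated]) (simp add: ftc)
  then show ?thesis
    unfolding at_within_interior[OF T(2)] by (rule vector_derivative_unique_at[OF _ leibniz])
qed

lemma mixed_partials_commute: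
  fixes f :: "real \<Rightarrow> real \<Rightarrow> 'a::banach"
  assumes "open U" "(t, th) \<in> U"
    and f_t: "\<And>x y. (x, y) \<in> U \<Longrightarrow> ((\<lambda>s. f s y) has_vector_derivative f_t x y) (at x)"
    and f_th: "\<And>x y. (x, y) \<in> U \<Longrightarrow> ((\<lambda>s. f x s) has_vector_derivative f_th x y) (at y)"
    and f_th_t: "\<And>x y. (x, y) \<in> U \<Longrightarrow> ((\<lambda>s. f_th s y) has_vector_derivative f_th_t x y) (at x)"
    and f_t_th: "((\<lambda>s. f_t t s) has_vector_derivative f_t_th) (at th)"
    and cont_f_th: "continuous_on U (\<lambda>(x, y). f_th x y)"
    and cont_f_th_t: "continuous_on U (\<lambda>(x, y). f_th_t x y)"
  shows "f_t_th = f_th_t t th"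
proof -
  obtain A B where AB: "open A" "open B" "t \<in> A" "th \<in> B" "A \<times> B \<subseteq> U"
    by (rule open_prod_elim[OF assms(1,2)]) blast
  obtain d where d: "d > 0" "cball t d \<subseteq> A" using AB open_contains_cball by metis
  obtain e where e: "e > 0" "cball th e \<subseteq> B" using AB open_contains_cball by metis
  define a b where "a = th - e" and "b = th + e"
  have th: "th \<in> interior {a..b}" using e unfolding a_def b_def by simp
  have box: "cball t d \<times> {a..b} \<subseteq> U"
    using AB d e unfolding a_def b_def cball_eq_atLeastAtMost by auto
  have f_t_eq: "f_t t y = f_t t a + integral {a..y} (f_th_t t)" if "y \<in> {a..b}" for y
  proof -
    have "cball t d \<times> {a..y} \<subseteq> U" using box that by fastforce
    from integral_mixed_partial[OF this convex_cball _ _ f_t f_th f_th_t cont_f_th cont_f_th_t]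
    show ?thesis using that d by (simp add: algebra_simps)
  qed
  have "continuous_on {a..b} (f_th_t t)"
    using box d by (intro continuous_on_slice[OF cont_f_th_t]) auto
  from has_vector_derivative_add[OF has_vector_derivative_const
      integral_has_vector_derivative[OF this interior_subset[THEN subsetD, OF th]]]
  have "((\<lambda>y. f_t t a + integral {a..y} (f_th_t t)) has_vector_derivative f_th_t t th) (at th within {a..b})"
    by simp
  then have "((\<lambda>y. f_t t y) has_vector_derivative f_th_t t th) (at th within {a..b})"
    by (rule has_vector_derivative_transform[OF interior_subset[THEN subsetD, OF th], rotated])
      (erule f_t_eq)
  then show ?thesis
    unfolding at_within_interior[OF th] by (rule vector_derivative_unique_at[OF f_t_th])
qed

lemma smooth2_on_dTh_dT:
  assumes "open U" "smooth2_on U f" "(t, th) \<in> U"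
  shows "dTh (dT f) t th = dT (dTh f) t th"
  using assms(2) by (intro mixed_partials_commute[OF assms(1,3)])
    (auto intro: smooth2_on_has_dT smooth2_on_has_dTh smooth2_on_continuous_on
      smooth2_on_dT smooth2_on_dTh assms(3))

lemma geodesic_energy_identity:
  fixes v v' w w' v_th :: "'a::real_inner"
  assumes geodesic: "n *\<^sub>R w' + n' *\<^sub>R w = - (1/2) *\<^sub>R (g *\<^sub>R v_th + g' *\<^sub>R v)"
    and horizontal: "w \<bullet> v = 0" and horizontal_th: "w \<bullet> v_th = - (v \<bullet> v')"
    and n': "n' = (v \<bullet> v') / n" and g: "g = (w \<bullet> w) / n"
  shows "n * (2 * (w \<bullet> w')) + n' * (w \<bullet> w) = 0"
proof -
  have "w \<bullet> (n *\<^sub>R w' + n' *\<^sub>R w) = w \<bullet> (- (1/2) *\<^sub>R (g *\<^sub>R v_th + g' *\<^sub>R v))"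
    using geodesic by simp
  then have "n * (w \<bullet> w') + n' * (w \<bullet> w) = (1/2) * g * (v \<bullet> v')"
    using horizontal horizontal_th by (simp add: inner_add_right)
  also have "\<dots> = (1/2) * n' * (w \<bullet> w)"
    using n' g by simp
  finally show ?thesis by simp
qed

lemma dT_of_real_mult:
  assumes "((\<lambda>s. g s th) has_real_derivative g') (at t)"
    and "((\<lambda>s. V s th) has_vector_derivative V') (at t)"
  shows "dT (\<lambda>t th. complex_of_real (g t th) * V t th) t th
         = complex_of_real (g t th) * V' + complex_of_real g' * V t th"
  unfolding dT_def
  by (rule vector_derivative_at[OF has_vector_derivative_mult[OF has_vector_derivative_of_real]])
    (use assms in auto)

lemma dTh_of_real_mult:
  assumes "((\<lambda>s. g t s) has_real_derivative g') (at th)"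
    and "((\<lambda>s. V t s) has_vector_derivative V') (at th)"
  shows "dTh (\<lambda>t th. complex_of_real (g t th) * V t th) t th
         = complex_of_real (g t th) * V' + complex_of_real g' * V t th"
  unfolding dTh_def
  by (rule vector_derivative_at[OF has_vector_derivative_mult[OF has_vector_derivative_of_real]])
    (use assms in auto)

lemma horizontal_geodesic_energy_has_derivative_zero:
  fixes c :: "real \<Rightarrow> real \<Rightarrow> complex"
  assumes U: "open U" "smooth2_on U c" "(t, th) \<in> U"
    and immersion: "dTh c t th \<noteq> 0"
    and horizontal: "\<And>s. dT c t s \<bullet> dTh c t s = 0"
    and geodesic: "dT (\<lambda>t th. complex_of_real (norm (dTh c t th)) * dT c t th) t th
          = - (1/2) * dTh (\<lambda>t th. complex_of_real ((norm (dT c t th))\<^sup>2 / norm (dTh c t th)) * dTh c t th) t th"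
  shows "((\<lambda>s. norm (dTh c s th) * (norm (dT c s th))\<^sup>2) has_real_derivative 0) (at t)"
proof -
  define v w v' w' v_th where "v = dTh c t th" and "w = dT c t th" and "v' = dT (dTh c) t th"
    and "w' = dT (dT c) t th" and "v_th = dTh (dTh c) t th"
  define n' where "n' = (v \<bullet> v') / norm v"
  have d_v_t: "((\<lambda>s. dTh c s th) has_vector_derivative v') (at t)"
    unfolding v'_def using smooth2_on_has_dT[OF smooth2_on_dTh] U by blast
  have d_w_t: "((\<lambda>s. dT c s th) has_vector_derivative w') (at t)"
    unfolding w'_def using smooth2_on_has_dT[OF smooth2_on_dT] U by blast
  have d_v_th: "((\<lambda>s. dTh c t s) has_vector_derivative v_th) (at th)"
    unfolding v_th_def using smooth2_on_has_dTh[OF smooth2_on_dTh] U by blast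
  have d_w_th: "((\<lambda>s. dT c t s) has_vector_derivative v') (at th)"
    unfolding v'_def smooth2_on_dTh_dT[OF U, symmetric]
    using smooth2_on_has_dTh[OF smooth2_on_dT] U by blast
  have norm_v_t: "((\<lambda>s. norm (dTh c s th)) has_real_derivative n') (at t)"
    using has_real_derivative_norm[OF _ d_v_t] immersion unfolding n'_def v_def by simp
  have norm_w_t: "((\<lambda>s. (norm (dT c s th))\<^sup>2) has_real_derivative 2 * (w \<bullet> w')) (at t)"
    using has_real_derivative_inner[OF d_w_t d_w_t] unfolding w_def power2_norm_eq_inner
    by (simp add: inner_commute)
  obtain g' where g': "((\<lambda>s. (norm (dT c t s))\<^sup>2 / norm (dTh c t s)) has_real_derivative g') (at th)"
    using DERIV_divide[OF has_real_derivative_inner[OF d_w_th d_w_th] has_real_derivative_norm[OF _ d_v_th]]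
      immersion unfolding power2_norm_eq_inner by auto
  have "((\<lambda>s. dT c t s \<bullet> dTh c t s) has_real_derivative 0) (at th)"
    using horizontal by simp
  then have "w \<bullet> v_th + v' \<bullet> v = 0"
    unfolding v_def w_def by (rule DERIV_unique[OF has_real_derivative_inner[OF d_w_th d_v_th]])
  then have horizontal_th: "w \<bullet> v_th = - (v \<bullet> v')" by (simp add: inner_commute)
  have "norm v *\<^sub>R w' + n' *\<^sub>R w = - (1/2) *\<^sub>R (((w \<bullet> w) / norm v) *\<^sub>R v_th + g' *\<^sub>R v)"
    using geodesic dT_of_real_mult[where g="\<lambda>t th. norm (dTh c t th)" and V="dT c", OF norm_v_t d_w_t]
      dTh_of_real_mult[where g="\<lambda>t th. (norm (dT c t th))\<^sup>2 / norm (dTh c t th)" and V="dTh c", OF g' d_v_th]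
    unfolding v_def w_def scaleR_conv_of_real power2_norm_eq_inner by simp
  from geodesic_energy_identity[OF this] horizontal horizontal_th
  have "norm v * (2 * (w \<bullet> w')) + n' * (w \<bullet> w) = 0" unfolding v_def w_def n'_def by simp
  with DERIV_mult[OF norm_v_t norm_w_t] show ?thesis
    unfolding v_def w_def power2_norm_eq_inner by (simp add: algebra_simps)
qed

theorem mainTheorem17:
  fixes c :: "real \<Rightarrow> real \<Rightarrow> complex"
    and a :: "real \<Rightarrow> real \<Rightarrow> real"
    and t0 t1 :: real
  assumes interval: "t0 < t1"
    and smooth: "\<exists>U. open U \<and> {t0..t1} \<times> UNIV \<subseteq> U \<and> smooth2_on U c"
    and periodic: "\<And>t th. c t (th + 2 * pi) = c t th"
    and immersion: "\<And>t th. t \<in> {t0..t1} \<Longrightarrow> dTh c t th \<noteq> 0"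
    and horizontal: "\<And>t th. t \<in> {t0..t1} \<Longrightarrow> dT c t th \<bullet> dTh c t th = 0"
    and a_def: "\<And>t th. t \<in> {t0..t1} \<Longrightarrow>
                  dT c t th = complex_of_real (a t th) * \<i> * dTh c t th / complex_of_real (norm (dTh c t th))"
    and geodesic: "\<And>t th. t \<in> {t0..t1} \<Longrightarrow>
          dT (\<lambda>t th. complex_of_real (norm (dTh c t th)) * dT c t th) t th
          = - (1/2) * dTh (\<lambda>t th. complex_of_real ((norm (dT c t th))\<^sup>2 / norm (dTh c t th)) * dTh c t th) t th"
  shows "\<forall>th. \<forall>t\<in>{t0..t1}. norm (dTh c t th) * (a t th)\<^sup>2 = norm (dTh c t0 th) * (a t0 th)\<^sup>2"
proof (intro allI ballI)
  fix th t assume t: "t \<in> {t0..t1}"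
  obtain U where U: "open U" "{t0..t1} \<times> UNIV \<subseteq> U" "smooth2_on U c" using smooth by blast
  have "\<exists>C. \<forall>s\<in>{t0..t1}. norm (dTh c s th) * (norm (dT c s th))\<^sup>2 = C"
  proof (rule has_field_derivative_zero_constant)
    fix s assume s: "s \<in> {t0..t1}"
    show "((\<lambda>s. norm (dTh c s th) * (norm (dT c s th))\<^sup>2) has_real_derivative 0) (at s within {t0..t1})"
      by (rule has_field_derivative_at_within[OF horizontal_geodesic_energy_has_derivative_zero[OF U(1,3)]])
        (use s U(2) immersion horizontal geodesic in auto)
  qed simp
  then obtain C where C: "\<And>s. s \<in> {t0..t1} \<Longrightarrow> norm (dTh c s th) * (norm (dT c s th))\<^sup>2 = C"
    by blast
  have "norm (dTh c s th) * (a s th)\<^sup>2 = C" if "s \<in> {t0..t1}" for s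
    using C[OF that] by (simp add: a_def[OF that] norm_scaled_unit_normal[OF immersion[OF that]])
  then show "norm (dTh c t th) * (a t th)\<^sup>2 = norm (dTh c t0 th) * (a t0 th)\<^sup>2"
    using t interval by simp
qed

end
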